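(* Let $f:\mathbb{R}\to(0,+\infty)$ be Lipschitz continuous and continuously differentiable with $f>0$, $f'\le 0$ and $\lim_{x\to+\infty}f(x)=0$. Let $r>0$, $\tau_0\ge 0$, and let $A:(-\infty,r)\to\mathbb{R}$ be continuous with $A(t)=\varphi(t)$ for $t\le 0$, where $\varphi:(-\infty,0]\to\mathbb{R}$ is continuous. Then there exists a unique function $\tau:[0,r)\to[0,+\infty)$ satisfying $$\int_{t-\tau(t)}^{t}f(A(\sigma))\,d\sigma=\int_{-\tau_0}^{0}f(\varphi(\sigma))\,d\sigma\quad\text{for all }t\in[0,r).\tag{I}$$ Moreover, this $\tau$ is continuously differentiable and satisfies $$\tau'(t)=1-\frac{f(A(t))}{f(A(t-\tau(t)))}\quad\text{for all }t\in[0,r),\qquad \tau(0)=\tau_0.\tag{ODE}$$ Conversely, if $\tau:[0,r)\to[0,\infty)$ is a $C^1$ function satisfying (ODE), then it satisfies (I). *)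

theory Defs
  imports "HOL-Analysis.Analysis"
begin

end

theory Submission
  imports Defs
begin

text \<open>
  Let \<open>P\<close> be a primitive of \<open>g = f \<circ> A\<close> on \<open>(-\<infinity>, r)\<close>; since \<open>f > 0\<close>, \<open>P\<close> is strictly
  increasing. Equation (I) says \<open>P (t - \<tau> t) = P t - C\<close> with \<open>C = P 0 - P (-\<tau>0) \<ge> 0\<close>, so
  \<open>t - \<tau> t\<close> is obtained by inverting \<open>P\<close>: it exists by the intermediate value theorem, is
  unique by injectivity, and is \<open>C\<^sup>1\<close> by the inverse function theorem, and differentiating
  the identity gives the ODE. Conversely, the ODE says precisely that
  \<open>t \<mapsto> P t - P (t - \<tau> t)\<close> has derivative zero, so it keeps its value \<open>C\<close> from \<open>t = 0\<close>.
\<close>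

lemma continuous_on_lessThan_has_primitive:
  fixes g :: "real \<Rightarrow> real"
  assumes cont: "continuous_on {..<r} g"
  obtains P where "\<And>x. x < r \<Longrightarrow> (P has_real_derivative g x) (at x)"
proof
  \<comment> \<open>signed integral from the base point \<open>c\<close>; one of the two terms is always zero\<close>
  define c where "c = r - 1"
  define P where "P x = integral {c..x} g - integral {x..c} g" for x
  fix x assume "x < r"
  define a where "a = min x c - 1"
  define b where "b = (max x c + r) / 2"
  have ab: "a < x" "x < b" "a < c" "c < b" "b < r"
    using \<open>x < r\<close> by (auto simp: a_def b_def c_def)
  have cont_ab: "continuous_on {a..b} g"
    using ab by (auto intro: continuous_on_subset[OF cont])
  have P_eq: "P y = integral {a..y} g - integral {a..c} g" if "y \<in> {a<..<b}" for y
  proof (cases "c \<le> y")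
    case True
    have "integral {a..c} g + integral {c..y} g = integral {a..y} g"
      using True that ab
      by (intro Henstock_Kurzweil_Integration.integral_combine integrable_continuous_real
          continuous_on_subset[OF cont_ab]) auto
    moreover have "integral {y..c} g = 0"
      using True by (cases "y = c") auto
    ultimately show ?thesis by (simp add: P_def)
  next
    case False
    have "integral {a..y} g + integral {y..c} g = integral {a..c} g"
      using False that ab
      by (intro Henstock_Kurzweil_Integration.integral_combine integrable_continuous_real
          continuous_on_subset[OF cont_ab]) auto
    then show ?thesis using False by (simp add: P_def)
  qed
  have "((\<lambda>y. integral {a..y} g) has_real_derivative g x) (at x within {a..b})"
    using ab by (intro integral_has_real_derivative cont_ab) auto
  then have "((\<lambda>y. integral {a..y} g - integral {a..c} g) has_real_derivative g x) (at x within {a..b})"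
    by (auto intro!: derivative_eq_intros)
  then have "((\<lambda>y. integral {a..y} g - integral {a..c} g) has_real_derivative g x) (at x within {a<..<b})"
    by (rule has_field_derivative_subset) auto
  moreover have "at x within {a<..<b} = at x"
    using ab by (intro at_within_open) auto
  ultimately have "((\<lambda>y. integral {a..y} g - integral {a..c} g) has_real_derivative g x) (at x)"
    by simp
  then show "(P has_real_derivative g x) (at x)"
    by (rule has_field_derivative_transform_within_open[where S="{a<..<b}"]) (use ab P_eq in auto)
qed

locale positive_primitive =
  fixes r :: real and g P :: "real \<Rightarrow> real"
  assumes P_derivative: "\<And>x. x < r \<Longrightarrow> (P has_real_derivative g x) (at x)"
    and g_pos: "\<And>x. x < r \<Longrightarrow> g x > 0"
begin

lemma integral_eq_diff:
  assumes "a \<le> b" "b < r"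
  shows "integral {a..b} g = P b - P a"
proof (rule integral_unique, rule fundamental_theorem_of_calculus[OF \<open>a \<le> b\<close>])
  fix x assume "x \<in> {a..b}"
  with assms have "(P has_real_derivative g x) (at x within {a..b})"
    by (auto intro: has_field_derivative_at_within[OF P_derivative])
  then show "(P has_vector_derivative g x) (at x within {a..b})"
    by (simp add: has_real_derivative_iff_has_vector_derivative)
qed

lemma strict_mono_P: "strict_mono_on {..<r} P"
proof (rule strict_mono_onI)
  fix a b assume "a \<in> {..<r}" "b \<in> {..<r}" "a < b"
  show "P a < P b"
  proof (rule DERIV_pos_imp_increasing[OF \<open>a < b\<close>])
    fix x assume "a \<le> x" "x \<le> b"
    with \<open>b \<in> {..<r}\<close> have "x < r" by simp
    then show "\<exists>y. DERIV P x :> y \<and> y > 0"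
      using P_derivative g_pos by blast
  qed
qed

lemma P_less_iff: "a < r \<Longrightarrow> b < r \<Longrightarrow> P a < P b \<longleftrightarrow> a < b"
  using strict_mono_on_less[OF strict_mono_P] by simp

lemma P_eq_iff: "a < r \<Longrightarrow> b < r \<Longrightarrow> P a = P b \<longleftrightarrow> a = b"
  using strict_mono_on_eqD[OF strict_mono_P] by auto

lemma inj_on_P: "inj_on P {..<r}"
  by (rule strict_mono_on_imp_inj_on[OF strict_mono_P])

lemma isCont_P: "x < r \<Longrightarrow> isCont P x"
  by (rule DERIV_isCont[OF P_derivative])

lemma continuous_on_P: "continuous_on {..<r} P"
  by (intro continuous_at_imp_continuous_on) (simp add: isCont_P)

text \<open>
  \<open>lag C t\<close> is the point \<open>s < r\<close> with \<open>P s = P t - C\<close>; it is an arbitrary value of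
  \<open>inv_into\<close> when \<open>P t - C\<close> is not attained.
\<close>

definition lag :: "real \<Rightarrow> real \<Rightarrow> real" where
  "lag C t = inv_into {..<r} P (P t - C)"

lemma lag_eqI: "y < r \<Longrightarrow> P y = P t - C \<Longrightarrow> lag C t = y"
  unfolding lag_def using inj_on_P by (metis inv_into_f_f lessThan_iff)

lemma lag:
  assumes "0 \<le> C" "a \<le> t" "t < r" "P a \<le> P t - C"
  shows "lag C t \<le> t" "P (lag C t) = P t - C"
proof -
  have "\<forall>x. a \<le> x \<and> x \<le> t \<longrightarrow> isCont P x"
    using \<open>t < r\<close> isCont_P by simp
  then obtain y where "a \<le> y" "y \<le> t" "P y = P t - C"
    using IVT[of P a "P t - C" t] assms by auto
  moreover from this assms have "lag C t = y"
    by (intro lag_eqI) auto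
  ultimately show "lag C t \<le> t" "P (lag C t) = P t - C"
    by auto
qed

lemma lag_has_real_derivative:
  assumes "t < r" "lag C t \<le> t" "P (lag C t) = P t - C"
  shows "(lag C has_real_derivative g t / g (lag C t)) (at t)"
proof -
  define y where "y = lag C t"
  have "y < r" "P y = P t - C"
    using assms by (simp_all add: y_def)
  have "(inv_into {..<r} P has_derivative (*) (inverse (g y))) (at (P y))"
  proof (rule has_derivative_inverse_strong[where S="{..<r}" and f=P and x=y and f'="(*) (g y)"])
    show "(P has_derivative (*) (g y)) (at y)"
      using P_derivative[OF \<open>y < r\<close>] by (simp add: has_field_derivative_def)
    show "(*) (g y) \<circ> (*) (inverse (g y)) = id"
      using g_pos[OF \<open>y < r\<close>] by (auto simp: fun_eq_iff)
    show "inv_into {..<r} P (P x) = x" if "x \<in> {..<r}" for x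
      using inj_on_P that by (rule inv_into_f_f)
  qed (use \<open>y < r\<close> continuous_on_P in auto)
  then have "(inv_into {..<r} P has_real_derivative inverse (g y)) (at (P t - C))"
    using \<open>P y = P t - C\<close> by (simp add: has_field_derivative_def)
  moreover have "((\<lambda>x. P x - C) has_real_derivative g t) (at t)"
    using DERIV_diff[OF P_derivative[OF \<open>t < r\<close>] DERIV_const[of C]] by simp
  ultimately have "((\<lambda>x. inv_into {..<r} P (P x - C)) has_real_derivative inverse (g y) * g t) (at t)"
    by (rule DERIV_chain2)
  then show ?thesis
    by (simp add: lag_def[abs_def] y_def divide_inverse mult.commute)
qed

definition delay :: "real \<Rightarrow> real \<Rightarrow> real" where
  "delay \<tau>0 t = t - lag (P 0 - P (-\<tau>0)) t"

lemma delay: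
  assumes "0 \<le> \<tau>0" "t \<in> {0..<r}"
  shows "0 \<le> delay \<tau>0 t" "P (t - delay \<tau>0 t) = P t - (P 0 - P (-\<tau>0))"
proof -
  have "P (-\<tau>0) \<le> P 0" "P 0 \<le> P t"
    using assms P_less_iff[of "-\<tau>0" 0] P_less_iff[of 0 t] by (auto simp: le_less)
  then have "lag (P 0 - P (-\<tau>0)) t \<le> t \<and> P (lag (P 0 - P (-\<tau>0)) t) = P t - (P 0 - P (-\<tau>0))"
    using assms lag[of "P 0 - P (-\<tau>0)" "-\<tau>0" t] by auto
  then show "0 \<le> delay \<tau>0 t" "P (t - delay \<tau>0 t) = P t - (P 0 - P (-\<tau>0))"
    by (auto simp: delay_def)
qed

lemma integral_delay:
  assumes "0 \<le> \<tau>0" "t \<in> {0..<r}"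
  shows "integral {t - delay \<tau>0 t..t} g = integral {-\<tau>0..0} g"
  using assms delay[OF assms] by (simp add: integral_eq_diff)

lemma delay_unique:
  assumes "0 \<le> \<tau>0" "t \<in> {0..<r}" "0 \<le> \<rho>"
    and "integral {t - \<rho>..t} g = integral {-\<tau>0..0} g"
  shows "\<rho> = delay \<tau>0 t"
proof -
  have "P (t - \<rho>) = P (t - delay \<tau>0 t)"
    using assms delay[OF assms(1,2)] by (simp add: integral_eq_diff)
  then show ?thesis
    using assms delay(1)[OF assms(1,2)] P_eq_iff[of "t - \<rho>" "t - delay \<tau>0 t"] by simp
qed

lemma delay_0:
  assumes "0 \<le> \<tau>0" "0 < r"
  shows "delay \<tau>0 0 = \<tau>0"
proof -
  have "P (- delay \<tau>0 0) = P (-\<tau>0)"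
    using delay(2)[of \<tau>0 0] assms by simp
  then show ?thesis
    using assms delay(1)[of \<tau>0 0] P_eq_iff[of "- delay \<tau>0 0" "-\<tau>0"] by simp
qed

lemma delay_has_real_derivative:
  assumes "0 \<le> \<tau>0" "t \<in> {0..<r}"
  shows "(delay \<tau>0 has_real_derivative 1 - g t / g (t - delay \<tau>0 t)) (at t)"
proof -
  have "(lag (P 0 - P (-\<tau>0)) has_real_derivative g t / g (t - delay \<tau>0 t)) (at t)"
    using lag_has_real_derivative delay[OF assms] assms by (simp add: delay_def)
  then show ?thesis
    unfolding delay_def[abs_def] by (rule DERIV_diff[OF DERIV_ident])
qed

lemma continuous_on_delay_derivative:
  assumes "continuous_on {..<r} g" "0 \<le> \<tau>0"
  shows "continuous_on {0..<r} (\<lambda>t. 1 - g t / g (t - delay \<tau>0 t))"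
proof -
  have "continuous_on {0..<r} (delay \<tau>0)"
    using DERIV_isCont[OF delay_has_real_derivative[OF assms(2)]]
    by (intro continuous_at_imp_continuous_on) blast
  then have "continuous_on {0..<r} (\<lambda>t. g (t - delay \<tau>0 t))"
    using delay(1)[OF assms(2)]
    by (intro continuous_on_compose2[OF assms(1)] continuous_intros) force+
  moreover have "continuous_on {0..<r} g"
    using assms(1) by (rule continuous_on_subset) auto
  moreover have "g (t - delay \<tau>0 t) \<noteq> 0" if "t \<in> {0..<r}" for t
    using g_pos[of "t - delay \<tau>0 t"] delay(1)[OF assms(2) that] that by simp
  ultimately show ?thesis
    by (intro continuous_intros) auto
qed

lemma integral_window_constant_if_ode:
  assumes "convex S" "S \<subseteq> {..<r}"
    and nonneg: "\<And>t. t \<in> S \<Longrightarrow> 0 \<le> \<tau> t"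
    and deriv: "\<And>t. t \<in> S \<Longrightarrow> (\<tau> has_real_derivative \<tau>' t) (at t within S)"
    and ode: "\<And>t. t \<in> S \<Longrightarrow> \<tau>' t = 1 - g t / g (t - \<tau> t)"
    and "s \<in> S" "t \<in> S"
  shows "integral {t - \<tau> t..t} g = integral {s - \<tau> s..s} g"
proof -
  have window: "u < r" "u - \<tau> u \<le> u" if "u \<in> S" for u
    using that assms(2) nonneg[OF that] by auto
  have "((\<lambda>t. P t - P (t - \<tau> t)) has_real_derivative 0) (at u within S)" if "u \<in> S" for u
  proof -
    have "u - \<tau> u < r"
      using window[OF that] by linarith
    have "((\<lambda>t. P (t - \<tau> t)) has_real_derivative g (u - \<tau> u) * (1 - \<tau>' u)) (at u within S)"
      by (rule DERIV_chain2[OF P_derivative[OF \<open>u - \<tau> u < r\<close>]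
            DERIV_diff[OF DERIV_ident deriv[OF that]]])
    then have "((\<lambda>t. P t - P (t - \<tau> t)) has_real_derivative g u - g (u - \<tau> u) * (1 - \<tau>' u))
        (at u within S)"
      by (rule DERIV_diff[OF has_field_derivative_at_within[OF P_derivative[OF window(1)[OF that]]]])
    moreover have "g u - g (u - \<tau> u) * (1 - \<tau>' u) = 0"
      using ode[OF that] g_pos[OF \<open>u - \<tau> u < r\<close>] by simp
    ultimately show ?thesis
      by simp
  qed
  from has_field_derivative_zero_constant[OF \<open>convex S\<close> this]
  obtain c where c: "\<And>u. u \<in> S \<Longrightarrow> P u - P (u - \<tau> u) = c"
    by blast
  have "integral {u - \<tau> u..u} g = c" if "u \<in> S" for u
    using integral_eq_diff[OF window(2,1)[OF that]] c[OF that] by simp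
  then show ?thesis
    using assms(6,7) by simp
qed

lemma delay_equation_if_ode:
  assumes "\<And>t. t \<in> {0..<r} \<Longrightarrow> 0 \<le> \<tau> t"
    and "\<And>t. t \<in> {0..<r} \<Longrightarrow> (\<tau> has_real_derivative \<tau>' t) (at t within {0..<r})"
    and "\<And>t. t \<in> {0..<r} \<Longrightarrow> \<tau>' t = 1 - g t / g (t - \<tau> t)"
    and "\<tau> 0 = \<tau>0" "t \<in> {0..<r}"
  shows "integral {t - \<tau> t..t} g = integral {-\<tau>0..0} g"
proof -
  have "integral {t - \<tau> t..t} g = integral {0 - \<tau> 0..0} g"
    by (rule integral_window_constant_if_ode[of "{0..<r}"]) (use assms in auto)
  then show ?thesis
    using assms(4) by simp
qed

end

theorem lemma2p1:
  fixes f f' :: "real \<Rightarrow> real" and A \<phi> :: "real \<Rightarrow> real" and r \<tau>0 :: real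
  assumes f_lip: "\<exists>L. lipschitz_on L UNIV f"
    and f_deriv: "\<And>x. (f has_real_derivative f' x) (at x)"
    and f'_cont: "continuous_on UNIV f'"
    and f_pos: "\<And>x. f x > 0"
    and f'_nonpos: "\<And>x. f' x \<le> 0"
    and f_lim: "(f \<longlongrightarrow> 0) at_top"
    and r_pos: "r > 0"
    and tau0: "\<tau>0 \<ge> 0"
    and A_cont: "continuous_on {..<r} A"
    and phi_cont: "continuous_on {..0} \<phi>"
    and A_phi: "\<And>t. t \<le> 0 \<Longrightarrow> A t = \<phi> t"
  shows
   "(\<exists>\<tau> :: real \<Rightarrow> real.
       (\<forall>t\<in>{0..<r}. \<tau> t \<ge> 0 \<and>
          integral {t - \<tau> t..t} (\<lambda>\<sigma>. f (A \<sigma>)) = integral {-\<tau>0..0} (\<lambda>\<sigma>. f (\<phi> \<sigma>)))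
     \<and> (\<forall>\<rho> :: real \<Rightarrow> real.
          (\<forall>t\<in>{0..<r}. \<rho> t \<ge> 0 \<and>
             integral {t - \<rho> t..t} (\<lambda>\<sigma>. f (A \<sigma>)) = integral {-\<tau>0..0} (\<lambda>\<sigma>. f (\<phi> \<sigma>)))
          \<longrightarrow> (\<forall>t\<in>{0..<r}. \<rho> t = \<tau> t))
     \<and> (\<exists>\<tau>' :: real \<Rightarrow> real.
          (\<forall>t\<in>{0..<r}. (\<tau> has_real_derivative \<tau>' t) (at t within {0..<r}))
          \<and> continuous_on {0..<r} \<tau>'
          \<and> (\<forall>t\<in>{0..<r}. \<tau>' t = 1 - f (A t) / f (A (t - \<tau> t))))
     \<and> \<tau> 0 = \<tau>0)
   \<and>
   (\<forall>\<tau> \<tau>' :: real \<Rightarrow> real.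
       (\<forall>t\<in>{0..<r}. \<tau> t \<ge> 0)
     \<and> (\<forall>t\<in>{0..<r}. (\<tau> has_real_derivative \<tau>' t) (at t within {0..<r}))
     \<and> continuous_on {0..<r} \<tau>'
     \<and> (\<forall>t\<in>{0..<r}. \<tau>' t = 1 - f (A t) / f (A (t - \<tau> t)))
     \<and> \<tau> 0 = \<tau>0
     \<longrightarrow> (\<forall>t\<in>{0..<r}.
            integral {t - \<tau> t..t} (\<lambda>\<sigma>. f (A \<sigma>)) = integral {-\<tau>0..0} (\<lambda>\<sigma>. f (\<phi> \<sigma>))))"
proof -
  let ?g = "\<lambda>\<sigma>. f (A \<sigma>)"
  have "continuous_on UNIV f"
    using DERIV_isCont[OF f_deriv] by (intro continuous_at_imp_continuous_on) blast
  then have g_cont: "continuous_on {..<r} ?g"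
    by (rule continuous_on_compose2[OF _ A_cont]) auto
  obtain P where "\<And>x. x < r \<Longrightarrow> (P has_real_derivative ?g x) (at x)"
    using continuous_on_lessThan_has_primitive[OF g_cont] by blast
  then interpret positive_primitive r ?g P
    using f_pos by unfold_locales
  have initial: "integral {-\<tau>0..0} (\<lambda>\<sigma>. f (\<phi> \<sigma>)) = integral {-\<tau>0..0} ?g"
    by (rule integral_cong) (simp add: A_phi)
  show ?thesis
    unfolding initial
  proof (rule conjI[OF exI[of _ "delay \<tau>0"]],
      intro conjI ballI allI impI exI[of _ "\<lambda>t. 1 - ?g t / ?g (t - delay \<tau>0 t)"])
    fix t assume "t \<in> {0..<r}"
    then show "0 \<le> delay \<tau>0 t" "integral {t - delay \<tau>0 t..t} ?g = integral {-\<tau>0..0} ?g"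
      "(delay \<tau>0 has_real_derivative 1 - ?g t / ?g (t - delay \<tau>0 t)) (at t within {0..<r})"
      using tau0 by (auto simp: delay integral_delay
          intro: has_field_derivative_at_within[OF delay_has_real_derivative])
  next
    fix \<rho> t assume "\<forall>t\<in>{0..<r}. 0 \<le> \<rho> t \<and> integral {t - \<rho> t..t} ?g = integral {-\<tau>0..0} ?g"
      and "t \<in> {0..<r}"
    then show "\<rho> t = delay \<tau>0 t"
      using delay_unique[OF tau0] by blast
  next
    show "continuous_on {0..<r} (\<lambda>t. 1 - ?g t / ?g (t - delay \<tau>0 t))"
      by (rule continuous_on_delay_derivative[OF g_cont tau0])
    show "delay \<tau>0 0 = \<tau>0"
      by (rule delay_0[OF tau0 r_pos])
  qed (use delay_equation_if_ode in blast)+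
qed

end
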